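(* Let $\gamma>0$ and let $\tilde K_{12}$ be the kernel of the Fourier multiplier $-\partial_{12}\Delta^{-1}\ln^{-\gamma}(e+|\nabla|)$ (i.e. the operator with symbol $-\frac{k_1k_2}{|k|^2}\ln^{-\gamma}(e+|k|)$). Then there is a constant $C>0$ depending only on $\gamma$ such that for all $x=(x_1,x_2)\in\mathbb{R}^2$ with $x_1>0$, $x_2>0$, $$\tilde K_{12}(x_1,x_2)\ge \frac{C x_1x_2}{|x|^4}\ln^{-\gamma}\Big(e+\frac1{|x|}\Big)e^{-|x|^2}.$$ *)

theory Defs
  imports "HOL-Analysis.Analysis"
begin

text \<open>Symbol of the Fourier multiplier  - d_12 Delta^(-1) ln^(-gamma)(e+|nabla|):
  m(k) = - k1 k2 / |k|^2 * ln(e+|k|)^(-gamma)   (value 0 at k = 0, a null set).\<close>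
definition symb :: "real \<Rightarrow> real \<times> real \<Rightarrow> real" where
  "symb \<gamma> k = - (fst k * snd k) / (norm k)\<^sup>2 * (ln (exp 1 + norm k)) powr (- \<gamma>)"

definition kernel_eps :: "real \<Rightarrow> real \<Rightarrow> real \<times> real \<Rightarrow> complex" where
  "kernel_eps \<gamma> \<epsilon> x =
     complex_of_real (1 / (2 * pi)\<^sup>2) *
     integral\<^sup>L (lborel :: (real \<times> real) measure)
       (\<lambda>k. complex_of_real (symb \<gamma> k * exp (- \<epsilon> * (norm k)\<^sup>2)) * cis (inner k x))"

text \<open>The (real-valued) kernel of the multiplier, for x \<noteq> 0:
  limit of the regularised inverse Fourier transforms as eps \<rightarrow> 0+.\<close>
definition tildeK :: "real \<Rightarrow> real \<times> real \<Rightarrow> real" where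
  "tildeK \<gamma> x = Re (Lim (at_right 0) (\<lambda>\<epsilon>. kernel_eps \<gamma> \<epsilon> x))"

end

theory Submission
  imports Defs "HOL-Probability.Probability" "HOL-Real_Asymp.Real_Asymp"
begin

text \<open>
  Build a probability measure \<open>\<rho>\<close> on \<open>[0, \<infinity>)\<close> with
  \<open>\<integral> exp (- t r\<^sup>2) d\<rho>(t) = ln (e + r) powr (- \<gamma>)\<close> by composing three subordinations: Gamma
  integrals give \<open>(ln a) powr (- \<gamma>)\<close> as a mixture of \<open>a powr (- s)\<close> and \<open>(e + r) powr (- s)\<close> as a
  mixture of \<open>exp (- u r)\<close>, and the one-sided stable law of index 1/2 writes \<open>exp (- u r)\<close> as a
  mixture of \<open>exp (- t r\<^sup>2)\<close>. Together with \<open>1 / |k|\<^sup>2 = \<integral>\<^sub>0\<^sup>\<infinity> exp (- \<tau> |k|\<^sup>2) d\<tau>\<close> this writes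
  the symbol as a superposition of the Gaussians \<open>- k\<^sub>1 k\<^sub>2 exp (- (\<tau> + t) |k|\<^sup>2)\<close>, whose Fourier
  transforms are explicit. Integrating out \<open>k\<close> and then \<open>\<tau>\<close> gives, with \<open>R = |x|\<^sup>2 / 4\<close>,
  \<open>K\<^sub>\<epsilon>(x) = x\<^sub>1 x\<^sub>2 / (\<pi> |x|\<^sup>4) \<integral> P (R / (t + \<epsilon>)) d\<rho>(t)\<close> with \<open>P w = 1 - (1 + w) exp (- w)\<close>.
  This increases as \<open>\<epsilon> \<down> 0\<close>, so the kernel is at least its value at \<open>\<epsilon> = R\<close>. There
  \<open>P w \<ge> exp (- 1 / w) / 12\<close> turns the integral back into the Laplace transform of \<open>\<rho>\<close> at
  \<open>r = 2 / |x|\<close>, and \<open>ln (e + 2 y) \<le> 2 ln (e + y)\<close> finishes the bound.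
\<close>

section \<open>Gaussian Fourier integrals\<close>

lemma integrable_gaussian_moment:
  fixes a :: real
  assumes "a > 0"
  shows "integrable lborel (\<lambda>k. exp (- a * k\<^sup>2) * k ^ n)"
proof -
  define \<sigma> where "\<sigma> = 1 / sqrt (2 * a)"
  have \<sigma>: "\<sigma> > 0" "2 * \<sigma>\<^sup>2 = 1 / a"
    using assms by (simp_all add: \<sigma>_def power_divide)
  then have eq: "(\<lambda>k. exp (- a * k\<^sup>2) * k ^ n) = (\<lambda>k. sqrt (2 * pi * \<sigma>\<^sup>2) * (normal_density 0 \<sigma> k * k ^ n))"
    using assms by (auto simp: fun_eq_iff normal_density_def field_simps)
  have "integrable lborel (\<lambda>k. normal_density 0 \<sigma> k * k ^ n)"
    using integrable_normal_moment[OF \<sigma>(1), of 0 n] by simp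
  then show ?thesis
    unfolding eq by (rule integrable_mult_right)
qed

lemma borel_measurable_cis [measurable]: "cis \<in> borel_measurable borel"
  by (rule borel_measurable_continuous_onI) (simp add: cis_conv_exp continuous_intros)

lemma integrable_of_real_mult_cis:
  fixes g :: "real \<Rightarrow> real"
  assumes "integrable lborel g"
  shows "integrable lborel (\<lambda>k. complex_of_real (g k) * cis (k * x))"
proof (rule Bochner_Integration.integrable_bound)
  show "integrable lborel (\<lambda>k. complex_of_real (g k))"
    using assms by simp
  show "(\<lambda>k. complex_of_real (g k) * cis (k * x)) \<in> borel_measurable lborel"
    using borel_measurable_integrable[OF assms] by measurable
qed (simp add: norm_mult)

lemma integral_gaussian_cis:
  fixes a x :: real
  assumes a: "a > 0"
  shows "(\<integral>k. complex_of_real (exp (- a * k\<^sup>2)) * cis (k * x) \<partial>lborel)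
         = complex_of_real (sqrt (pi / a) * exp (- x\<^sup>2 / (4 * a)))"
proof -
  define c where "c = sqrt (2 * a)"
  have c: "c > 0" "c\<^sup>2 = 2 * a"
    using a by (simp_all add: c_def)
  define t where "t = x / c"
  have "complex_of_real (exp (- t\<^sup>2 / 2)) = char std_normal_distribution t"
    by (simp add: char_std_normal_distribution)
  also have "\<dots> = (\<integral>y. std_normal_density y *\<^sub>R iexp (t * y) \<partial>lborel)"
    unfolding char_def by (subst integral_density) (auto simp: normal_density_nonneg)
  also have "\<dots> = c *\<^sub>R (\<integral>k. std_normal_density (0 + c * k) *\<^sub>R iexp (t * (0 + c * k)) \<partial>lborel)"
    using lborel_integral_real_affine[of c "\<lambda>y. std_normal_density y *\<^sub>R iexp (t * y)" 0] c by simp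
  also have "(\<lambda>k. std_normal_density (0 + c * k) *\<^sub>R iexp (t * (0 + c * k)))
      = (\<lambda>k. complex_of_real (1 / sqrt (2 * pi)) * (complex_of_real (exp (- a * k\<^sup>2)) * cis (k * x)))"
    using c by (auto simp: fun_eq_iff std_normal_density_def t_def cis_conv_exp scaleR_conv_of_real
        power_mult_distrib mult_ac)
  finally have "(\<integral>k. complex_of_real (exp (- a * k\<^sup>2)) * cis (k * x) \<partial>lborel)
      = complex_of_real (exp (- t\<^sup>2 / 2) * sqrt (2 * pi) / c)"
    using c by (auto simp: scaleR_conv_of_real field_simps)
  also have "exp (- t\<^sup>2 / 2) * sqrt (2 * pi) / c = sqrt (pi / a) * exp (- x\<^sup>2 / (4 * a))"
    using a c by (simp add: t_def c_def power_divide real_sqrt_divide real_sqrt_mult field_simps)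
  finally show ?thesis .
qed

lemma integral_eq_zero_if_antiderivative_vanishes_at_infinity:
  fixes f F :: "real \<Rightarrow> 'a::euclidean_space"
  assumes "\<And>x. (F has_vector_derivative f x) (at x)" and "\<And>x. isCont f x"
    and "integrable lborel f" and "(F \<longlongrightarrow> 0) at_top" and "(F \<longlongrightarrow> 0) at_bot"
  shows "integral\<^sup>L lborel f = 0"
proof -
  have "interval_lebesgue_integral lborel (-\<infinity>) \<infinity> f = 0 - 0"
    using assms
    by (intro interval_integral_FTC_integrable)
       (simp_all add: einterval_eq_UNIV set_integrable_def ereal_tendsto_simps1)
  then show ?thesis
    by (simp add: interval_lebesgue_integral_le_eq einterval_eq_UNIV set_lebesgue_integral_def)
qed

lemma tendsto_gaussian_cis_at_infinity:
  fixes a x :: real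
  assumes a: "a > 0"
  shows "((\<lambda>k. complex_of_real (exp (- a * k\<^sup>2)) * cis (k * x)) \<longlongrightarrow> 0) at_top"
    and "((\<lambda>k. complex_of_real (exp (- a * k\<^sup>2)) * cis (k * x)) \<longlongrightarrow> 0) at_bot"
proof -
  have norm: "(\<lambda>k. norm (complex_of_real (exp (- a * k\<^sup>2)) * cis (k * x))) = (\<lambda>k. exp (- a * k\<^sup>2))"
    unfolding norm_mult norm_of_real norm_cis by simp
  have "((\<lambda>k. norm (complex_of_real (exp (- a * k\<^sup>2)) * cis (k * x))) \<longlongrightarrow> 0) at_top"
    unfolding norm using a by real_asymp
  then show "((\<lambda>k. complex_of_real (exp (- a * k\<^sup>2)) * cis (k * x)) \<longlongrightarrow> 0) at_top"
    by (rule tendsto_norm_zero_cancel)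
  have "((\<lambda>k. norm (complex_of_real (exp (- a * k\<^sup>2)) * cis (k * x))) \<longlongrightarrow> 0) at_bot"
    unfolding norm using a by real_asymp
  then show "((\<lambda>k. complex_of_real (exp (- a * k\<^sup>2)) * cis (k * x)) \<longlongrightarrow> 0) at_bot"
    by (rule tendsto_norm_zero_cancel)
qed

lemma has_vector_derivative_gaussian_cis:
  fixes a x k :: real
  assumes a: "a > 0"
  shows "((\<lambda>y. - (complex_of_real (1 / (2 * a)) * (complex_of_real (exp (- a * y\<^sup>2)) * cis (y * x))))
    has_vector_derivative (complex_of_real (k * exp (- a * k\<^sup>2)) * cis (k * x)
      - complex_of_real (x / (2 * a)) * \<i> * (complex_of_real (exp (- a * k\<^sup>2)) * cis (k * x)))) (at k)"
proof -
  have "((\<lambda>z. - exp (- of_real a * z\<^sup>2) / (2 * of_real a) * exp (\<i> * of_real x * z))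
      has_field_derivative complex_of_real (k * exp (- a * k\<^sup>2)) * cis (k * x)
        - complex_of_real (x / (2 * a)) * \<i> * (complex_of_real (exp (- a * k\<^sup>2)) * cis (k * x))) (at (of_real k))"
    using a by (auto intro!: derivative_eq_intros simp: cis_conv_exp exp_of_real[symmetric])
      (auto simp: field_simps power2_eq_square)
  from has_vector_derivative_real_field[OF this] show ?thesis
    by (simp add: cis_conv_exp exp_of_real[symmetric] mult_ac)
qed

text \<open>The function \<open>(k - \<i> x / (2 a)) exp (- a k\<^sup>2) cis (k x)\<close> has an antiderivative vanishing at
  \<open>\<plusminus>\<infinity>\<close>, so the first moment reduces to the zeroth.\<close>
lemma integral_gaussian_moment1_cis:
  fixes a x :: real
  assumes a: "a > 0"
  shows "(\<integral>k. complex_of_real (k * exp (- a * k\<^sup>2)) * cis (k * x) \<partial>lborel)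
         = \<i> * complex_of_real (x / (2 * a) * sqrt (pi / a) * exp (- x\<^sup>2 / (4 * a)))"
proof -
  define g where "g k = complex_of_real (exp (- a * k\<^sup>2)) * cis (k * x)" for k
  define g1 where "g1 k = complex_of_real (k * exp (- a * k\<^sup>2)) * cis (k * x)" for k
  have int_g: "integrable lborel g"
    unfolding g_def using integrable_of_real_mult_cis[OF integrable_gaussian_moment[OF a, of 0]] by simp
  have "integrable lborel (\<lambda>k. k * exp (- a * k\<^sup>2))"
    using integrable_gaussian_moment[OF a, of 1] by (simp add: mult.commute)
  then have int_g1: "integrable lborel g1"
    unfolding g1_def by (rule integrable_of_real_mult_cis)
  have "integral\<^sup>L lborel (\<lambda>k. g1 k - complex_of_real (x / (2 * a)) * \<i> * g k) = 0"
  proof (rule integral_eq_zero_if_antiderivative_vanishes_at_infinity)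
    show "((\<lambda>k. - (complex_of_real (1 / (2 * a)) * g k)) has_vector_derivative
        g1 k - complex_of_real (x / (2 * a)) * \<i> * g k) (at k)" for k
      unfolding g_def g1_def by (rule has_vector_derivative_gaussian_cis[OF a])
    show "isCont (\<lambda>k. g1 k - complex_of_real (x / (2 * a)) * \<i> * g k) k" for k
      unfolding g_def g1_def cis_conv_exp by (intro continuous_intros)
    show "integrable lborel (\<lambda>k. g1 k - complex_of_real (x / (2 * a)) * \<i> * g k)"
      using int_g int_g1 by simp
    show "((\<lambda>k. - (complex_of_real (1 / (2 * a)) * g k)) \<longlongrightarrow> 0) at_top"
      "((\<lambda>k. - (complex_of_real (1 / (2 * a)) * g k)) \<longlongrightarrow> 0) at_bot"
      unfolding g_def
      using tendsto_minus[OF tendsto_mult_left[OF tendsto_gaussian_cis_at_infinity(1)[OF a]]]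
        tendsto_minus[OF tendsto_mult_left[OF tendsto_gaussian_cis_at_infinity(2)[OF a]]]
      by (simp_all only: mult_zero_right minus_zero)
  qed
  then have "integral\<^sup>L lborel g1 = complex_of_real (x / (2 * a)) * \<i> * integral\<^sup>L lborel g"
    using int_g int_g1 by simp
  then show ?thesis
    unfolding g_def g1_def integral_gaussian_cis[OF a] by (simp add: mult_ac)
qed

lemma lborel_integral_prod_mult:
  fixes f g :: "real \<Rightarrow> 'a::{real_normed_field, second_countable_topology, banach}"
  assumes f: "integrable lborel f" and g: "integrable lborel g"
  shows "integrable (lborel \<Otimes>\<^sub>M lborel) (\<lambda>(x, y). f x * g y)"
    and "(\<integral>p. (case p of (x, y) \<Rightarrow> f x * g y) \<partial>(lborel \<Otimes>\<^sub>M lborel)) = integral\<^sup>L lborel f * integral\<^sup>L lborel g"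
proof -
  have [measurable]: "f \<in> borel_measurable borel" "g \<in> borel_measurable borel"
    using borel_measurable_integrable[OF f] borel_measurable_integrable[OF g] by auto
  show int: "integrable (lborel \<Otimes>\<^sub>M lborel) (\<lambda>(x, y). f x * g y)"
  proof (rule lborel_pair.Fubini_integrable)
    have "integrable lborel (\<lambda>x. norm (f x) * (\<integral>y. norm (g y) \<partial>lborel))"
      using f by (intro integrable_mult_left) auto
    then show "integrable lborel (\<lambda>x. \<integral>y. norm (case (x, y) of (x, y) \<Rightarrow> f x * g y) \<partial>lborel)"
      by (simp add: norm_mult)
  qed (use g in \<open>auto intro!: integrable_mult_right\<close>)
  have "(\<integral>p. (case p of (x, y) \<Rightarrow> f x * g y) \<partial>(lborel \<Otimes>\<^sub>M lborel)) = (\<integral>x. (\<integral>y. f x * g y \<partial>lborel) \<partial>lborel)"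
    using lborel_pair.integral_fst'[OF int] by simp
  then show "(\<integral>p. (case p of (x, y) \<Rightarrow> f x * g y) \<partial>(lborel \<Otimes>\<^sub>M lborel)) = integral\<^sup>L lborel f * integral\<^sup>L lborel g"
    by simp
qed

lemma integrable_gaussian_2d:
  fixes a :: real
  assumes a: "a > 0"
  shows "integrable (lborel :: (real \<times> real) measure) (\<lambda>k. exp (- a * (norm k)\<^sup>2))"
proof -
  have "integrable lborel (\<lambda>y::real. exp (- a * y\<^sup>2))"
    using integrable_gaussian_moment[OF a, of 0] by (simp only: power_0 mult_1_right)
  then have "integrable (lborel \<Otimes>\<^sub>M lborel) (\<lambda>(y, z). exp (- a * y\<^sup>2) * exp (- a * z\<^sup>2))"
    using lborel_integral_prod_mult(1) by blast
  also have "(\<lambda>(y, z). exp (- a * y\<^sup>2) * exp (- a * z\<^sup>2)) = (\<lambda>k. exp (- a * (norm k)\<^sup>2))"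
    by (auto simp: fun_eq_iff norm_Pair exp_add[symmetric] algebra_simps)
  finally show ?thesis
    by (simp add: lborel_prod)
qed

lemma integral_gaussian_2d_cis:
  fixes x :: "real \<times> real" and a :: real
  assumes a: "a > 0"
  shows "(\<integral>k. complex_of_real (- (fst k * snd k) * exp (- a * (norm k)\<^sup>2)) * cis (inner k x)
            \<partial>(lborel :: (real \<times> real) measure))
     = complex_of_real (pi * fst x * snd x / (4 * a ^ 3) * exp (- (norm x)\<^sup>2 / (4 * a)))"
proof -
  obtain x1 x2 where x: "x = (x1, x2)"
    by (cases x)
  define h where "h y z = complex_of_real (z * exp (- a * z\<^sup>2)) * cis (z * y)" for y z :: real
  have int_h: "integrable lborel (h y)" for y
  proof -
    have "integrable lborel (\<lambda>z. z * exp (- a * z\<^sup>2))"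
      using integrable_gaussian_moment[OF a, of 1] by (simp add: mult.commute)
    then show ?thesis
      unfolding h_def by (rule integrable_of_real_mult_cis)
  qed
  have integral_h: "integral\<^sup>L lborel (h y) = \<i> * complex_of_real (y / (2 * a) * sqrt (pi / a) * exp (- y\<^sup>2 / (4 * a)))" for y
    unfolding h_def by (rule integral_gaussian_moment1_cis[OF a])
  have "(\<lambda>k. complex_of_real (- (fst k * snd k) * exp (- a * (norm k)\<^sup>2)) * cis (inner k x))
      = (\<lambda>k. - (case k of (k1, k2) \<Rightarrow> h x1 k1 * h x2 k2))"
    by (auto simp: fun_eq_iff x h_def norm_Pair algebra_simps simp flip: exp_add cis_mult of_real_mult)
  then have "(\<integral>k. complex_of_real (- (fst k * snd k) * exp (- a * (norm k)\<^sup>2)) * cis (inner k x)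
        \<partial>(lborel :: (real \<times> real) measure))
      = - (integral\<^sup>L lborel (h x1) * integral\<^sup>L lborel (h x2))"
    using lborel_integral_prod_mult(2)[OF int_h int_h] by (simp add: lborel_prod[symmetric])
  also have "\<dots> = complex_of_real (pi * fst x * snd x / (4 * a ^ 3) * exp (- (norm x)\<^sup>2 / (4 * a)))"
  proof -
    have "exp (- x1\<^sup>2 / (4 * a)) * exp (- x2\<^sup>2 / (4 * a)) = exp (- (norm x)\<^sup>2 / (4 * a))"
      by (simp add: x norm_Pair exp_add[symmetric] diff_divide_distrib)
    moreover have "sqrt (pi / a) * sqrt (pi / a) = pi / a"
      using a by simp
    ultimately show ?thesis
      using a unfolding integral_h by (simp add: x field_simps power3_eq_cube flip: of_real_mult)
  qed
  finally show ?thesis .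
qed

section \<open>One-dimensional integrals on the half-line\<close>

lemma gaussian_has_integral: "((\<lambda>w::real. exp (- w\<^sup>2)) has_integral sqrt pi) UNIV"
proof -
  have "(normal_density 0 (1 / sqrt 2) has_integral 1) UNIV"
    using has_integral_integral_lborel[OF integrable_normal_density] by simp
  moreover have "normal_density 0 (1 / sqrt 2) = (\<lambda>w. exp (- w\<^sup>2) / sqrt pi)"
    by (simp add: fun_eq_iff normal_density_def power_divide)
  ultimately have "((\<lambda>w. exp (- w\<^sup>2) / sqrt pi) has_integral 1) UNIV"
    by simp
  from has_integral_mult_right[OF this, of "sqrt pi"] show ?thesis
    by simp
qed

lemma image_Ioi_minus_divide:
  fixes c :: real
  assumes c: "c > 0"
  shows "(\<lambda>y. y - c / y) ` {0<..} = UNIV"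
proof (intro equalityI subsetI)
  fix w :: real
  define y where "y = (w + sqrt (w\<^sup>2 + 4 * c)) / 2"
  have "\<bar>w\<bar> < sqrt (w\<^sup>2 + 4 * c)"
    using c by (intro real_less_rsqrt) simp
  then have "w + sqrt (w\<^sup>2 + 4 * c) > 0"
    using abs_ge_minus_self[of w] by linarith
  then have y: "y > 0"
    by (simp add: y_def)
  have "y\<^sup>2 - w * y = c"
    using c by (simp add: y_def power2_eq_square algebra_simps)
  then have "y - c / y = w"
    using y by (simp add: field_simps power2_eq_square)
  then show "w \<in> (\<lambda>y. y - c / y) ` {0<..}"
    using y by force
qed simp

lemma strict_mono_on_Ioi_minus_divide:
  fixes c :: real
  assumes c: "c > 0"
  shows "strict_mono_on {0<..} (\<lambda>y. y - c / y)"
proof (rule strict_mono_onI)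
  fix r s :: real assume "r \<in> {0<..}" "s \<in> {0<..}" "r < s"
  then have "c / s < c / r"
    using c by (intro divide_strict_left_mono) auto
  then show "r - c / r < s - c / s"
    using \<open>r < s\<close> by linarith
qed

lemma Cauchy_Schloemilch_weighted_has_integral:
  fixes c :: real
  assumes c: "c > 0"
  shows "((\<lambda>y. (1 + c / y\<^sup>2) * exp (- (y - c / y)\<^sup>2)) has_integral sqrt pi) {0<..}"
proof -
  have deriv: "((\<lambda>y. y - c / y) has_field_derivative 1 + c / y\<^sup>2) (at y within {0<..})"
    if "y \<in> {0<..}" for y
    using that by (auto intro!: derivative_eq_intros simp: power2_eq_square field_simps)
  have "(\<lambda>w::real. exp (- w\<^sup>2)) absolutely_integrable_on UNIV"
    by (rule nonnegative_absolutely_integrable_1) (use gaussian_has_integral in auto)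
  then have "(\<lambda>y. \<bar>1 + c / y\<^sup>2\<bar> * exp (- (y - c / y)\<^sup>2)) absolutely_integrable_on {0<..}
      \<and> integral {0<..} (\<lambda>y. \<bar>1 + c / y\<^sup>2\<bar> * exp (- (y - c / y)\<^sup>2)) = sqrt pi"
    using has_absolute_integral_change_of_variables_1'[OF _ deriv
        strict_mono_on_imp_inj_on[OF strict_mono_on_Ioi_minus_divide[OF c]], of "\<lambda>w. exp (- w\<^sup>2)" "sqrt pi"]
      gaussian_has_integral
    unfolding image_Ioi_minus_divide[OF c] by (simp add: integral_unique)
  moreover have "\<bar>1 + c / y\<^sup>2\<bar> = 1 + c / y\<^sup>2" for y
    using c by simp
  ultimately have "(\<lambda>y. (1 + c / y\<^sup>2) * exp (- (y - c / y)\<^sup>2)) absolutely_integrable_on {0<..}"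
    "integral {0<..} (\<lambda>y. (1 + c / y\<^sup>2) * exp (- (y - c / y)\<^sup>2)) = sqrt pi"
    by simp_all
  then show ?thesis
    using set_lebesgue_integral_eq_integral(1) by (simp add: has_integral_iff)
qed

lemma has_integral_Ioi_inversion:
  fixes f :: "real \<Rightarrow> real" and c :: real
  assumes c: "c > 0" and f: "f absolutely_integrable_on {0<..}"
  shows "((\<lambda>z. c / z\<^sup>2 * f (c / z)) has_integral integral {0<..} f) {0<..}"
proof -
  have image: "(\<lambda>z. c / z) ` {0<..} = {0<..}"
  proof (intro equalityI subsetI)
    fix z :: real assume "z \<in> {0<..}"
    then have "c / z \<in> {0<..}" "z = c / (c / z)"
      using c by auto
    then show "z \<in> (\<lambda>z. c / z) ` {0<..}"
      by blast
  qed (use c in auto)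
  have inj: "inj_on (\<lambda>z. c / z) {0<..}"
    using c by (auto simp: inj_on_def)
  have deriv: "((\<lambda>z. c / z) has_field_derivative - c / z\<^sup>2) (at z within {0<..})" if "z \<in> {0<..}" for z
    using that by (auto intro!: derivative_eq_intros simp: power2_eq_square field_simps)
  have "(\<lambda>z. \<bar>- c / z\<^sup>2\<bar> * f (c / z)) absolutely_integrable_on {0<..}
      \<and> integral {0<..} (\<lambda>z. \<bar>- c / z\<^sup>2\<bar> * f (c / z)) = integral {0<..} f"
    using has_absolute_integral_change_of_variables_1'[OF _ deriv inj, of f] f unfolding image by simp
  moreover have "\<bar>- c / z\<^sup>2\<bar> = c / z\<^sup>2" for z
    using c by simp
  ultimately have "(\<lambda>z. c / z\<^sup>2 * f (c / z)) absolutely_integrable_on {0<..}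
      \<and> integral {0<..} (\<lambda>z. c / z\<^sup>2 * f (c / z)) = integral {0<..} f"
    by (simp only:)
  then show ?thesis
    using set_lebesgue_integral_eq_integral(1) unfolding has_integral_iff by blast
qed

text \<open>By the inversion \<open>y = c / z\<close>, the two parts of the weight \<open>1 + c / y\<^sup>2\<close> in
  \<open>Cauchy_Schloemilch_weighted_has_integral\<close> contribute equally.\<close>
lemma Cauchy_Schloemilch_has_integral:
  fixes c :: real
  assumes c: "c > 0"
  shows "((\<lambda>y. exp (- (y - c / y)\<^sup>2)) has_integral sqrt pi / 2) {0<..}"
proof -
  define S :: "real set" where "S = {0<..}"
  define F where "F y = exp (- (y - c / y)\<^sup>2)" for y
  have weighted: "((\<lambda>y. (1 + c / y\<^sup>2) * F y) has_integral sqrt pi) S"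
    unfolding F_def S_def by (rule Cauchy_Schloemilch_weighted_has_integral[OF c])
  have F_abs: "F absolutely_integrable_on S"
  proof (rule measurable_bounded_by_integrable_imp_absolutely_integrable)
    show "F \<in> borel_measurable (lebesgue_on S)"
      unfolding F_def S_def by (intro continuous_imp_measurable_on_sets_lebesgue continuous_intros) auto
    show "norm (F y) \<le> (1 + c / y\<^sup>2) * F y" if "y \<in> S" for y
      using c by (simp add: F_def)
  qed (use weighted in \<open>auto simp: S_def\<close>)
  then have int_F: "F integrable_on S"
    using set_lebesgue_integral_eq_integral(1) by blast
  have "c / z\<^sup>2 * F (c / z) = c / z\<^sup>2 * F z" if "z \<in> {0<..}" for z
    using c that by (simp add: F_def power2_eq_square field_simps)
  then have inverted: "((\<lambda>z. c / z\<^sup>2 * F z) has_integral integral S F) S"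
    using has_integral_Ioi_inversion[OF c F_abs[unfolded S_def]] unfolding S_def
    by (rule has_integral_eq)
  have "sqrt pi = integral S (\<lambda>y. F y + c / y\<^sup>2 * F y)"
    using weighted by (simp add: distrib_right integral_unique)
  also have "\<dots> = integral S F + integral S (\<lambda>y. c / y\<^sup>2 * F y)"
    using int_F inverted by (intro integral_add) auto
  also have "integral S (\<lambda>y. c / y\<^sup>2 * F y) = integral S F"
    using inverted by (rule integral_unique)
  finally have "integral S F = sqrt pi / 2"
    by simp
  with int_F have "(F has_integral sqrt pi / 2) S"
    by (simp add: has_integral_iff)
  then show ?thesis
    unfolding F_def S_def .
qed

lemma nn_integral_Ioi_gaussian:
  "(\<integral>\<^sup>+y. ennreal (exp (- y\<^sup>2)) * indicator {0<..} y \<partial>lborel) = ennreal (sqrt pi / 2)"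
proof -
  have hb: "has_bochner_integral lborel (\<lambda>y. indicator {0..} y *\<^sub>R exp (- y\<^sup>2)) (sqrt pi / 2)"
    by (rule gaussian_moment_0)
  have "(\<integral>\<^sup>+y. ennreal (exp (- y\<^sup>2)) * indicator {0<..} y \<partial>lborel)
      = (\<integral>\<^sup>+y. ennreal (indicator {0..} y *\<^sub>R exp (- y\<^sup>2)) \<partial>lborel)"
    by (rule nn_integral_cong_AE)
       (use AE_lborel_singleton[of 0] in \<open>eventually_elim, auto split: split_indicator\<close>)
  also have "\<dots> = ennreal (sqrt pi / 2)"
    using hb by (subst nn_integral_eq_integral) (auto simp: has_bochner_integral_iff)
  finally show ?thesis .
qed

lemma nn_integral_Ioi_exp_minus_sq_minus_inverse_sq:
  fixes c :: real
  assumes c: "c \<ge> 0"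
  shows "(\<integral>\<^sup>+y. ennreal (exp (- y\<^sup>2 - c\<^sup>2 / y\<^sup>2)) * indicator {0<..} y \<partial>lborel)
       = ennreal (sqrt pi / 2 * exp (- 2 * c))"
proof (cases "c = 0")
  case True
  then show ?thesis
    using nn_integral_Ioi_gaussian by simp
next
  case False
  then have c: "c > 0"
    using c by simp
  have "exp (- (y - c / y)\<^sup>2) * exp (- 2 * c) = exp (- y\<^sup>2 - c\<^sup>2 / y\<^sup>2)" if "y \<in> {0<..}" for y
    using that by (simp add: exp_add[symmetric] power2_eq_square field_simps)
  moreover have "((\<lambda>y. exp (- (y - c / y)\<^sup>2) * exp (- 2 * c)) has_integral sqrt pi / 2 * exp (- 2 * c)) {0<..}"
    by (rule has_integral_mult_left[OF Cauchy_Schloemilch_has_integral[OF c]])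
  ultimately have "((\<lambda>y. exp (- y\<^sup>2 - c\<^sup>2 / y\<^sup>2)) has_integral sqrt pi / 2 * exp (- 2 * c)) {0<..}"
    by (rule has_integral_eq)
  then show ?thesis
    by (rule nn_integral_has_integral_lebesgue'[rotated]) simp
qed

definition half_gaussian_density :: "real \<Rightarrow> real" where
  "half_gaussian_density y = indicator {0<..} y * (2 / sqrt pi * exp (- y\<^sup>2))"

lemma borel_measurable_half_gaussian_density [measurable]:
  "half_gaussian_density \<in> borel_measurable borel"
  unfolding half_gaussian_density_def by measurable

lemma half_gaussian_density_nonneg: "half_gaussian_density y \<ge> 0"
  by (simp add: half_gaussian_density_def)

text \<open>The one-sided stable law of index \<open>1/2\<close>: \<open>exp (- u r)\<close> is a mixture of the Gaussians
  \<open>exp (- t r\<^sup>2)\<close>, with \<open>t = u\<^sup>2 / (4 y\<^sup>2)\<close> and \<open>y\<close> half-Gaussian.\<close>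
lemma nn_integral_half_gaussian_subordination:
  fixes u r :: real
  assumes "u \<ge> 0" and "r \<ge> 0"
  shows "(\<integral>\<^sup>+y. ennreal (half_gaussian_density y) * ennreal (exp (- (u\<^sup>2 / (4 * y\<^sup>2)) * r\<^sup>2)) \<partial>lborel)
       = ennreal (exp (- u * r))"
proof -
  define c where "c = u * r / 2"
  have c: "c \<ge> 0"
    using assms by (simp add: c_def)
  have "(\<integral>\<^sup>+y. ennreal (half_gaussian_density y) * ennreal (exp (- (u\<^sup>2 / (4 * y\<^sup>2)) * r\<^sup>2)) \<partial>lborel)
      = (\<integral>\<^sup>+y. ennreal (2 / sqrt pi) * (ennreal (exp (- y\<^sup>2 - c\<^sup>2 / y\<^sup>2)) * indicator {0<..} y) \<partial>lborel)"
  proof (rule nn_integral_cong)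
    fix y :: real
    show "ennreal (half_gaussian_density y) * ennreal (exp (- (u\<^sup>2 / (4 * y\<^sup>2)) * r\<^sup>2))
        = ennreal (2 / sqrt pi) * (ennreal (exp (- y\<^sup>2 - c\<^sup>2 / y\<^sup>2)) * indicator {0<..} y)"
    proof (cases "y > 0")
      case True
      have "exp (- y\<^sup>2) * exp (- (u\<^sup>2 / (4 * y\<^sup>2)) * r\<^sup>2) = exp (- y\<^sup>2 - c\<^sup>2 / y\<^sup>2)"
        by (simp add: c_def exp_add[symmetric] power2_eq_square field_simps)
      then have "half_gaussian_density y * exp (- (u\<^sup>2 / (4 * y\<^sup>2)) * r\<^sup>2) = 2 / sqrt pi * exp (- y\<^sup>2 - c\<^sup>2 / y\<^sup>2)"
        using True by (simp add: half_gaussian_density_def)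
      then show ?thesis
        using True by (simp add: half_gaussian_density_nonneg ennreal_mult[symmetric])
    qed (simp add: half_gaussian_density_def)
  qed
  also have "\<dots> = ennreal (2 / sqrt pi) * ennreal (sqrt pi / 2 * exp (- 2 * c))"
    by (simp add: nn_integral_cmult nn_integral_Ioi_exp_minus_sq_minus_inverse_sq[OF c])
  also have "\<dots> = ennreal (exp (- u * r))"
    by (simp add: ennreal_mult[symmetric] c_def)
  finally show ?thesis .
qed

lemma nn_integral_Ioi_powr_exp:
  fixes s b :: real
  assumes s: "s > 0" and b: "b > 0"
  shows "(\<integral>\<^sup>+u. ennreal (indicator {0<..} u * u powr (s - 1) * exp (- b * u)) \<partial>lborel)
       = ennreal (Gamma s * b powr (- s))"
proof -
  define F where "F t = ennreal (indicator {0..} t * (t powr (s - 1) / exp t))" for t :: real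
  define I where "I = (\<integral>\<^sup>+u. ennreal (indicator {0<..} u * u powr (s - 1) * exp (- b * u)) \<partial>lborel)"
  have F_scaled: "F (0 + b * u) = ennreal (b powr (s - 1)) * ennreal (indicator {0<..} u * u powr (s - 1) * exp (- b * u))"
    for u
  proof (cases "u > 0")
    case True
    then have "(b * u) powr (s - 1) / exp (b * u) = b powr (s - 1) * (u powr (s - 1) * exp (- b * u))"
      using b by (simp add: powr_mult exp_minus divide_inverse)
    then show ?thesis
      using True b by (simp add: F_def ennreal_mult[symmetric])
  next
    case False
    then have "b * u \<le> 0"
      using b by (simp add: mult_nonneg_nonpos)
    then show ?thesis
      using False by (auto simp: F_def indicator_def)
  qed
  have "ennreal (Gamma s) = (\<integral>\<^sup>+t. F t \<partial>lborel)"
    unfolding F_def by (rule nn_integral_has_integral_lebesgue[symmetric]) (auto intro: Gamma_integral_real[OF s])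
  also have "\<dots> = ennreal \<bar>b\<bar> * (\<integral>\<^sup>+u. F (0 + b * u) \<partial>lborel)"
    by (rule nn_integral_real_affine) (use b in \<open>auto simp: F_def\<close>)
  also have "\<dots> = ennreal b * ennreal (b powr (s - 1)) * I"
    using b unfolding F_scaled I_def by (simp add: nn_integral_cmult mult.assoc)
  also have "ennreal b * ennreal (b powr (s - 1)) = ennreal (b powr s)"
    using b by (simp add: ennreal_mult[symmetric] powr_diff)
  finally have "ennreal (b powr (- s)) * ennreal (Gamma s) = ennreal (b powr (- s)) * ennreal (b powr s) * I"
    by (simp add: mult.assoc)
  also have "ennreal (b powr (- s)) * ennreal (b powr s) = 1"
    using b by (simp add: ennreal_mult[symmetric] powr_add[symmetric])
  finally show ?thesis
    using Gamma_real_pos[OF s] b by (simp add: I_def ennreal_mult mult.commute)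
qed

lemma nn_integral_Ioi_exp:
  fixes c :: real
  assumes c: "c > 0"
  shows "(\<integral>\<^sup>+\<tau>. ennreal (indicator {0<..} \<tau> * exp (- c * \<tau>)) \<partial>lborel) = ennreal (1 / c)"
proof -
  have "(\<integral>\<^sup>+\<tau>. ennreal (indicator {0<..} \<tau> * exp (- c * \<tau>)) \<partial>lborel)
      = (\<integral>\<^sup>+\<tau>. ennreal (indicator {0<..} \<tau> * \<tau> powr (1 - 1) * exp (- c * \<tau>)) \<partial>lborel)"
    by (intro nn_integral_cong) (simp split: split_indicator)
  also have "\<dots> = ennreal (Gamma 1 * c powr (- 1))"
    using c by (intro nn_integral_Ioi_powr_exp) auto
  finally show ?thesis
    using c by (simp add: powr_minus_divide)
qed

definition regularized_gamma2 :: "real \<Rightarrow> real" where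
  "regularized_gamma2 w = 1 - (1 + w) * exp (- w)"

lemma regularized_gamma2_bounds:
  assumes "w \<ge> 0"
  shows "0 \<le> regularized_gamma2 w" and "regularized_gamma2 w \<le> 1"
proof -
  have "(1 + w) * exp (- w) \<le> 1"
    using exp_ge_add_one_self[of w] by (simp add: exp_minus field_simps)
  then show "0 \<le> regularized_gamma2 w"
    by (simp add: regularized_gamma2_def)
  show "regularized_gamma2 w \<le> 1"
    using assms by (simp add: regularized_gamma2_def)
qed

lemma regularized_gamma2_mono:
  assumes "0 \<le> a" and "a \<le> b"
  shows "regularized_gamma2 a \<le> regularized_gamma2 b"
proof (rule deriv_nonneg_imp_mono[OF _ _ assms(2)])
  show "(regularized_gamma2 has_real_derivative w * exp (- w)) (at w)" for w
    unfolding regularized_gamma2_def[abs_def] by (auto intro!: derivative_eq_intros simp: algebra_simps)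
  show "0 \<le> w * exp (- w)" if "w \<in> {a..b}" for w
    using that assms by simp
qed

lemma regularized_gamma2_ge_square:
  assumes w: "0 \<le> w" "w \<le> 1"
  shows "w\<^sup>2 / 6 \<le> regularized_gamma2 w"
proof -
  have q: "1 + w + w\<^sup>2 / 2 \<le> exp w"
    using w by (intro exp_lower_Taylor_quadratic) simp
  have "w ^ 3 \<le> w\<^sup>2" "w ^ 4 \<le> w\<^sup>2"
    using w by (simp_all add: power_decreasing)
  moreover have "(1 - w\<^sup>2 / 6) * (1 + w + w\<^sup>2 / 2) = 1 + w + w\<^sup>2 / 3 - w ^ 3 / 6 - w ^ 4 / 12"
    by (simp add: algebra_simps power2_eq_square power3_eq_cube power4_eq_xxxx)
  ultimately have "1 + w \<le> (1 - w\<^sup>2 / 6) * (1 + w + w\<^sup>2 / 2)"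
    using zero_le_power2[of w] by linarith
  also have "\<dots> \<le> (1 - w\<^sup>2 / 6) * exp w"
    using w q power_le_one[of w 2] by (intro mult_left_mono) auto
  finally show ?thesis
    by (simp add: regularized_gamma2_def exp_minus field_simps)
qed

lemma regularized_gamma2_ge_one_twelfth:
  assumes w: "w \<ge> 1"
  shows "1 / 12 \<le> regularized_gamma2 w"
proof -
  have "1 + w + w\<^sup>2 / 2 \<le> exp w"
    using w by (intro exp_lower_Taylor_quadratic) simp
  moreover have "w \<le> w\<^sup>2"
    using w by (simp add: power2_eq_square)
  ultimately have "12 * (1 + w) \<le> 11 * exp w"
    using w by simp
  then show ?thesis
    by (simp add: regularized_gamma2_def exp_minus field_simps)
qed

lemma exp_minus_inverse_le_regularized_gamma2:
  assumes w: "w > 0"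
  shows "exp (- 1 / w) / 12 \<le> regularized_gamma2 w"
proof (cases "w \<le> 1")
  case True
  have "1 + 1 / w + (1 / w)\<^sup>2 / 2 \<le> exp (1 / w)"
    using w by (intro exp_lower_Taylor_quadratic) simp
  moreover have "(1 / w)\<^sup>2 / 2 = 1 / (2 * w\<^sup>2)" "0 \<le> 1 + 1 / w"
    using w by (simp_all add: power_divide)
  ultimately have "1 / (2 * w\<^sup>2) \<le> exp (1 / w)"
    by linarith
  then have "exp (- 1 / w) \<le> 2 * w\<^sup>2"
    using w by (simp add: exp_minus field_simps)
  then show ?thesis
    using regularized_gamma2_ge_square[of w] True w by simp
next
  case False
  moreover have "exp (- 1 / w) \<le> 1"
    using w by simp
  ultimately show ?thesis
    using regularized_gamma2_ge_one_twelfth[of w] by linarith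
qed

lemma nn_integral_Ioi_cube_inverse_exp:
  fixes b R :: real
  assumes b: "b > 0" and R: "R > 0"
  shows "(\<integral>\<^sup>+\<tau>. ennreal (indicator {0<..} \<tau> * (1 / (\<tau> + b) ^ 3 * exp (- R / (\<tau> + b)))) \<partial>lborel)
     = ennreal (regularized_gamma2 (R / b) / R\<^sup>2)"
proof -
  define G where "G a = exp (- R / a) * (1 / (R * a) + 1 / R\<^sup>2)" for a
  define F where "F \<tau> = G (\<tau> + b)" for \<tau>
  have G_deriv: "(G has_real_derivative 1 / a ^ 3 * exp (- R / a)) (at a)" if "a > 0" for a
  proof -
    have "(G has_real_derivative exp (- R / a) * (R / a\<^sup>2) * (1 / (R * a) + 1 / R\<^sup>2)
        + exp (- R / a) * (- (R / (R * a)\<^sup>2))) (at a)"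
      unfolding G_def using that R by (auto intro!: derivative_eq_intros simp: power2_eq_square)
    moreover have "exp (- R / a) * (R / a\<^sup>2) * (1 / (R * a) + 1 / R\<^sup>2) + exp (- R / a) * (- (R / (R * a)\<^sup>2))
        = (R / a\<^sup>2 * (1 / (R * a) + 1 / R\<^sup>2) - R / (R * a)\<^sup>2) * exp (- R / a)"
      by (simp only: algebra_simps)
    moreover have "R / a\<^sup>2 * (1 / (R * a) + 1 / R\<^sup>2) - R / (R * a)\<^sup>2 = 1 / a ^ 3"
      using that R by (simp add: field_simps power2_eq_square power3_eq_cube)
    ultimately show ?thesis
      by simp
  qed
  have "(\<integral>\<^sup>+\<tau>\<in>{0..}. ennreal (1 / (\<tau> + b) ^ 3 * exp (- R / (\<tau> + b))) \<partial>lborel) = ennreal (1 / R\<^sup>2 - F 0)"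
  proof (rule nn_integral_FTC_atLeast)
    show "(F has_real_derivative 1 / (\<tau> + b) ^ 3 * exp (- R / (\<tau> + b))) (at \<tau>)" if "0 \<le> \<tau>" for \<tau>
      unfolding F_def[abs_def] using G_deriv[of "\<tau> + b"] that b by (simp add: DERIV_shift)
    show "(F \<longlongrightarrow> 1 / R\<^sup>2) at_top"
      unfolding F_def G_def using R b by real_asymp
    show "0 \<le> 1 / (\<tau> + b) ^ 3 * exp (- R / (\<tau> + b))" if "0 \<le> \<tau>" for \<tau>
      using that b by simp
  qed measurable
  moreover have "(\<integral>\<^sup>+\<tau>. ennreal (indicator {0<..} \<tau> * (1 / (\<tau> + b) ^ 3 * exp (- R / (\<tau> + b)))) \<partial>lborel)
      = (\<integral>\<^sup>+\<tau>\<in>{0..}. ennreal (1 / (\<tau> + b) ^ 3 * exp (- R / (\<tau> + b))) \<partial>lborel)"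
    by (rule nn_integral_cong_AE)
       (use AE_lborel_singleton[of 0] in \<open>eventually_elim, auto split: split_indicator\<close>)
  moreover have "1 / R\<^sup>2 - F 0 = regularized_gamma2 (R / b) / R\<^sup>2"
    unfolding F_def G_def regularized_gamma2_def using R b by (simp add: field_simps power2_eq_square)
  ultimately show ?thesis
    by simp
qed

lemma one_le_ln_exp1_add:
  fixes y :: real
  assumes "y \<ge> 0"
  shows "1 \<le> ln (exp 1 + y)"
  using assms by (subst ln_ge_iff) (auto intro: add_pos_nonneg)

lemma ln_exp1_add_powr_le_one:
  fixes y g :: real
  assumes "y \<ge> 0" and "g \<ge> 0"
  shows "ln (exp 1 + y) powr (- g) \<le> 1"
  using one_le_ln_exp1_add[OF assms(1)] assms(2) by (simp add: powr_minus inverse_le_1_iff ge_one_powr_ge_zero)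

lemma ln_exp1_add_double_le:
  fixes y :: real
  assumes y: "y \<ge> 0"
  shows "ln (exp 1 + 2 * y) \<le> 2 * ln (exp 1 + y)"
proof -
  have e: "1 \<le> exp (1::real)"
    by simp
  have "exp 1 \<le> exp 1 * exp (1::real)"
    using e by simp
  moreover have "y \<le> exp 1 * y" "0 \<le> y * y"
    using mult_right_mono[OF e y] y by simp_all
  moreover have "(exp 1 + y)\<^sup>2 = exp 1 * exp 1 + 2 * (exp 1 * y) + y * y"
    by (simp add: power2_eq_square algebra_simps)
  ultimately have "exp 1 + 2 * y \<le> (exp 1 + y)\<^sup>2"
    by linarith
  moreover have pos: "0 < exp 1 + y" "0 < exp 1 + 2 * y"
    using y by (simp_all add: add_pos_nonneg)
  ultimately have "ln (exp 1 + 2 * y) \<le> ln ((exp 1 + y)\<^sup>2)"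
    by (subst ln_le_cancel_iff) auto
  also have "\<dots> = 2 * ln (exp 1 + y)"
    using pos by (simp add: ln_realpow)
  finally show ?thesis .
qed

lemma ln_exp1_add_double_powr_ge:
  fixes y g :: real
  assumes y: "y \<ge> 0" and g: "g \<ge> 0"
  shows "2 powr (- g) * ln (exp 1 + y) powr (- g) \<le> ln (exp 1 + 2 * y) powr (- g)"
proof -
  have "0 < ln (exp 1 + 2 * y)"
    using one_le_ln_exp1_add[of "2 * y"] y by simp
  then have "(2 * ln (exp 1 + y)) powr (- g) \<le> ln (exp 1 + 2 * y) powr (- g)"
    using ln_exp1_add_double_le[OF y] g by (intro powr_mono2') auto
  then show ?thesis
    using one_le_ln_exp1_add[OF y] by (simp add: powr_mult)
qed

lemma antimono_tendsto_at_right_SUP: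
  fixes f :: "real \<Rightarrow> real"
  assumes antimono: "\<And>x y. a < x \<Longrightarrow> x \<le> y \<Longrightarrow> f y \<le> f x"
    and bounded: "\<And>x. a < x \<Longrightarrow> f x \<le> B"
  shows "(f \<longlongrightarrow> (SUP x\<in>{a<..}. f x)) (at_right a)"
proof (rule order_tendstoI)
  have bdd: "bdd_above (f ` {a<..})"
    using bounded by (auto intro!: bdd_aboveI)
  fix l assume "l < (SUP x\<in>{a<..}. f x)"
  then obtain x0 where x0: "x0 > a" "l < f x0"
    using less_cSUP_iff[OF _ bdd] by auto
  then show "\<forall>\<^sub>F x in at_right a. l < f x"
    unfolding eventually_at_right_field
    by (intro exI[of _ x0]) (use x0 antimono in \<open>auto intro: less_le_trans\<close>)
next
  have bdd: "bdd_above (f ` {a<..})"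
    using bounded by (auto intro!: bdd_aboveI)
  fix u assume u: "(SUP x\<in>{a<..}. f x) < u"
  have "f x < u" if "a < x" for x
    using cSUP_upper[OF _ bdd, of x] that u by auto
  then show "\<forall>\<^sub>F x in at_right a. f x < u"
    unfolding eventually_at_right_field by (intro exI[of _ "a + 1"]) auto
qed

lemma abs_fst_mult_snd_le_norm_sq:
  fixes k :: "real \<times> real"
  shows "\<bar>fst k * snd k\<bar> \<le> (norm k)\<^sup>2"
proof -
  have "2 * \<bar>fst k\<bar> * \<bar>snd k\<bar> \<le> (fst k)\<^sup>2 + (snd k)\<^sup>2"
    using sum_squares_bound[of "\<bar>fst k\<bar>" "\<bar>snd k\<bar>"] by simp
  moreover have "\<bar>fst k\<bar> * \<bar>snd k\<bar> \<le> 2 * \<bar>fst k\<bar> * \<bar>snd k\<bar>"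
    by simp
  ultimately have "\<bar>fst k\<bar> * \<bar>snd k\<bar> \<le> (fst k)\<^sup>2 + (snd k)\<^sup>2"
    by linarith
  then show ?thesis
    by (simp add: norm_prod_def abs_mult)
qed

section \<open>A subordinator for the logarithmic multiplier\<close>

definition gamma_weight :: "real \<Rightarrow> real \<Rightarrow> real \<Rightarrow> real" where
  "gamma_weight s b u = indicator {0<..} u * u powr (s - 1) * exp (- b * u) / Gamma s"

lemma borel_measurable_Gamma_real [measurable]: "(Gamma :: real \<Rightarrow> real) \<in> borel_measurable borel"
proof -
  have "(\<lambda>s::real. inverse (rGamma s)) \<in> borel_measurable borel"
    by (intro borel_measurable_inverse borel_measurable_continuous_onI continuous_on_rGamma)
  then show ?thesis
    by (simp add: Gamma_def[abs_def])
qed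

lemma borel_measurable_gamma_weight [measurable]:
  "(\<lambda>p. gamma_weight (fst p) b (snd p)) \<in> borel_measurable (lborel \<Otimes>\<^sub>M lborel)"
  "gamma_weight s b \<in> borel_measurable borel"
  unfolding gamma_weight_def by measurable

lemma gamma_weight_nonneg: "s > 0 \<Longrightarrow> gamma_weight s b u \<ge> 0"
  using Gamma_real_pos[of s] by (simp add: gamma_weight_def)

lemma nn_integral_gamma_weight_exp:
  fixes s b r :: real
  assumes s: "s > 0" and br: "b + r > 0"
  shows "(\<integral>\<^sup>+u. ennreal (gamma_weight s b u) * ennreal (exp (- r * u)) \<partial>lborel) = ennreal ((b + r) powr (- s))"
proof -
  have "(\<integral>\<^sup>+u. ennreal (gamma_weight s b u) * ennreal (exp (- r * u)) \<partial>lborel)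
      = (\<integral>\<^sup>+u. ennreal (1 / Gamma s) * ennreal (indicator {0<..} u * u powr (s - 1) * exp (- (b + r) * u)) \<partial>lborel)"
  proof (rule nn_integral_cong)
    fix u :: real
    have "gamma_weight s b u * exp (- r * u) = 1 / Gamma s * (indicator {0<..} u * u powr (s - 1) * exp (- (b + r) * u))"
      by (simp add: gamma_weight_def exp_add[symmetric] algebra_simps)
    then show "ennreal (gamma_weight s b u) * ennreal (exp (- r * u))
        = ennreal (1 / Gamma s) * ennreal (indicator {0<..} u * u powr (s - 1) * exp (- (b + r) * u))"
      using Gamma_real_pos[OF s] gamma_weight_nonneg[OF s] by (simp add: ennreal_mult[symmetric])
  qed
  also have "\<dots> = ennreal (1 / Gamma s) * ennreal (Gamma s * (b + r) powr (- s))"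
    by (subst nn_integral_cmult) (measurable, simp only: nn_integral_Ioi_powr_exp[OF s br])
  also have "\<dots> = ennreal ((b + r) powr (- s))"
    using Gamma_real_pos[OF s] by (simp add: ennreal_mult[symmetric])
  finally show ?thesis .
qed

text \<open>The three factors are the mixing weights of the three subordinations: \<open>s\<close> for
  \<open>(ln a) powr (- \<gamma>)\<close>, \<open>u\<close> given \<open>s\<close> for \<open>(e + r) powr (- s)\<close>, and \<open>y\<close> with
  \<open>t = u\<^sup>2 / (4 y\<^sup>2)\<close> for \<open>exp (- u r)\<close>. The middle factor is junk for \<open>s \<le> 0\<close>, where the
  first one vanishes.\<close>
definition log_subordinator_density :: "real \<Rightarrow> (real \<times> real) \<times> real \<Rightarrow> ennreal" where
  "log_subordinator_density \<gamma> = (\<lambda>((s, u), y).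
     ennreal (gamma_weight \<gamma> 0 s) * ennreal (gamma_weight s (exp 1) u) * ennreal (half_gaussian_density y))"

definition log_subordinator_measure :: "real \<Rightarrow> real measure" where
  "log_subordinator_measure \<gamma> = distr (density ((lborel \<Otimes>\<^sub>M lborel) \<Otimes>\<^sub>M lborel) (log_subordinator_density \<gamma>))
     lborel (\<lambda>((s, u), y). u\<^sup>2 / (4 * y\<^sup>2))"

lemma borel_measurable_log_subordinator_density [measurable]:
  "log_subordinator_density \<gamma> \<in> borel_measurable ((lborel \<Otimes>\<^sub>M lborel) \<Otimes>\<^sub>M lborel)"
  unfolding log_subordinator_density_def case_prod_beta by measurable

lemma borel_measurable_subordinator_time [measurable]:
  "(\<lambda>((s::real, u::real), y::real). u\<^sup>2 / (4 * y\<^sup>2)) \<in> borel_measurable ((lborel \<Otimes>\<^sub>M lborel) \<Otimes>\<^sub>M lborel)"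
  unfolding case_prod_beta by measurable

lemma nn_integral_log_subordinator_density_over_y:
  fixes r :: real
  assumes r: "r \<ge> 0"
  shows "(\<integral>\<^sup>+y. log_subordinator_density \<gamma> ((s, u), y) * ennreal (exp (- u\<^sup>2 / (4 * y\<^sup>2) * r\<^sup>2)) \<partial>lborel)
    = ennreal (gamma_weight \<gamma> 0 s) * ennreal (gamma_weight s (exp 1) u) * ennreal (exp (- u * r))"
proof (cases "u > 0")
  case True
  then show ?thesis
    using nn_integral_half_gaussian_subordination[of u r] r
    by (simp add: log_subordinator_density_def nn_integral_cmult mult.assoc)
qed (simp add: gamma_weight_def log_subordinator_density_def)

lemma nn_integral_gamma_weights_over_u:
  fixes r :: real
  assumes r: "r \<ge> 0"
  shows "(\<integral>\<^sup>+u. ennreal (gamma_weight \<gamma> 0 s) * ennreal (gamma_weight s (exp 1) u) * ennreal (exp (- u * r)) \<partial>lborel)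
    = ennreal (gamma_weight \<gamma> 0 s) * ennreal (exp (- ln (exp 1 + r) * s))"
proof (cases "s > 0")
  case True
  have er: "exp 1 + r > 0"
    using r by (intro add_pos_nonneg) auto
  then have "(exp 1 + r) powr (- s) = exp (- ln (exp 1 + r) * s)"
    by (simp add: powr_def)
  then show ?thesis
    using nn_integral_gamma_weight_exp[OF True er]
    by (simp add: nn_integral_cmult mult.assoc mult.commute[of r])
qed (simp add: gamma_weight_def)

lemma nn_integral_log_subordinator_measure:
  fixes \<gamma> r :: real
  assumes \<gamma>: "\<gamma> > 0" and r: "r \<ge> 0"
  shows "(\<integral>\<^sup>+t. ennreal (exp (- t * r\<^sup>2)) \<partial>log_subordinator_measure \<gamma>) = ennreal (ln (exp 1 + r) powr (- \<gamma>))"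
proof -
  have "(\<integral>\<^sup>+t. ennreal (exp (- t * r\<^sup>2)) \<partial>log_subordinator_measure \<gamma>)
      = (\<integral>\<^sup>+p. log_subordinator_density \<gamma> p * ennreal (exp (- (snd (fst p))\<^sup>2 / (4 * (snd p)\<^sup>2) * r\<^sup>2))
          \<partial>((lborel \<Otimes>\<^sub>M lborel) \<Otimes>\<^sub>M lborel))"
    unfolding log_subordinator_measure_def
    by (subst nn_integral_distr) (auto simp: nn_integral_density case_prod_beta)
  also have "\<dots> = (\<integral>\<^sup>+su. \<integral>\<^sup>+y. log_subordinator_density \<gamma> (su, y)
      * ennreal (exp (- (snd su)\<^sup>2 / (4 * y\<^sup>2) * r\<^sup>2)) \<partial>lborel \<partial>(lborel \<Otimes>\<^sub>M lborel))"
    by (subst lborel.nn_integral_fst[symmetric]) auto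
  also have "\<dots> = (\<integral>\<^sup>+su. ennreal (gamma_weight \<gamma> 0 (fst su)) * ennreal (gamma_weight (fst su) (exp 1) (snd su))
      * ennreal (exp (- snd su * r)) \<partial>(lborel \<Otimes>\<^sub>M lborel))"
    using nn_integral_log_subordinator_density_over_y[OF r] by (auto intro!: nn_integral_cong)
  also have "\<dots> = (\<integral>\<^sup>+s. \<integral>\<^sup>+u. ennreal (gamma_weight \<gamma> 0 s) * ennreal (gamma_weight s (exp 1) u)
      * ennreal (exp (- u * r)) \<partial>lborel \<partial>lborel)"
    by (subst lborel.nn_integral_fst[symmetric]) auto
  also have "\<dots> = (\<integral>\<^sup>+s. ennreal (gamma_weight \<gamma> 0 s) * ennreal (exp (- ln (exp 1 + r) * s)) \<partial>lborel)"
    using nn_integral_gamma_weights_over_u[OF r] by (auto intro!: nn_integral_cong)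
  also have "\<dots> = ennreal (ln (exp 1 + r) powr (- \<gamma>))"
    using nn_integral_gamma_weight_exp[OF \<gamma>, of 0 "ln (exp 1 + r)"] one_le_ln_exp1_add[OF r]
    by (simp add: mult.commute)
  finally show ?thesis .
qed

locale log_subordinator = prob_space \<rho> for \<rho> :: "real measure" +
  fixes \<gamma> :: real
  assumes gamma_pos: "\<gamma> > 0"
    and sets_eq_borel: "sets \<rho> = sets borel"
    and AE_nonneg: "AE t in \<rho>. t \<ge> 0"
    and integral_exp_minus_sq: "\<And>r. r > 0 \<Longrightarrow> (\<integral>t. exp (- t * r\<^sup>2) \<partial>\<rho>) = ln (exp 1 + r) powr (- \<gamma>)"

lemma log_subordinator_log_subordinator_measure:
  assumes \<gamma>: "\<gamma> > 0"
  shows "log_subordinator (log_subordinator_measure \<gamma>) \<gamma>"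
proof -
  let ?\<rho> = "log_subordinator_measure \<gamma>"
  have sets: "sets ?\<rho> = sets borel"
    by (simp add: log_subordinator_measure_def)
  have "emeasure ?\<rho> (space ?\<rho>) = 1"
    using nn_integral_log_subordinator_measure[OF \<gamma>, of 0] by (simp add: nn_integral_const)
  then interpret prob_space ?\<rho>
    by (rule prob_spaceI)
  show ?thesis
  proof
    show "sets ?\<rho> = sets borel"
      by (fact sets)
    show "AE t in ?\<rho>. t \<ge> 0"
      unfolding log_subordinator_measure_def
      by (subst AE_distr_iff) (auto simp: measurable_cong_sets[OF sets_density refl])
    show "(\<integral>t. exp (- t * r\<^sup>2) \<partial>?\<rho>) = ln (exp 1 + r) powr (- \<gamma>)" if "r > 0" for r
    proof -
      have "(\<integral>t. exp (- t * r\<^sup>2) \<partial>?\<rho>) = enn2real (\<integral>\<^sup>+t. ennreal (exp (- t * r\<^sup>2)) \<partial>?\<rho>)"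
        by (rule integral_eq_nn_integral) (auto simp: measurable_cong_sets[OF sets refl])
      then show ?thesis
        using nn_integral_log_subordinator_measure[OF \<gamma>, of r] that by simp
    qed
  qed (fact \<gamma>)
qed

section \<open>The regularised kernel\<close>

lemma borel_measurable_fst_mult_snd [measurable]:
  "(\<lambda>k::real \<times> real. fst k * snd k) \<in> borel_measurable borel"
  by (intro borel_measurable_continuous_onI continuous_intros)

lemma borel_measurable_norm_sq [measurable]:
  "(\<lambda>k::real \<times> real. (norm k)\<^sup>2) \<in> borel_measurable borel"
  by (intro borel_measurable_continuous_onI continuous_intros)

lemma borel_measurable_cis_inner [measurable]:
  "(\<lambda>k::real \<times> real. cis (inner k x)) \<in> borel_measurable borel"
  by (intro borel_measurable_continuous_onI) (simp add: cis_conv_exp continuous_intros)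

text \<open>\<open>\<theta> = (\<tau>, t)\<close> pairs the time variable of \<open>1 / |k|\<^sup>2\<close> with the time of the subordinator.\<close>
definition kernel_integrand :: "real \<Rightarrow> real \<times> real \<Rightarrow> real \<times> real \<Rightarrow> real \<times> real \<Rightarrow> complex" where
  "kernel_integrand \<epsilon> x k \<theta> = complex_of_real (indicator {0<..} (fst \<theta>) * (- (fst k * snd k))
     * exp (- (fst \<theta> + snd \<theta> + \<epsilon>) * (norm k)\<^sup>2)) * cis (inner k x)"

lemma integral_kernel_integrand_freq:
  fixes \<epsilon> :: real and x \<theta> :: "real \<times> real"
  assumes a: "fst \<theta> + snd \<theta> + \<epsilon> > 0"
  shows "(\<integral>k. kernel_integrand \<epsilon> x k \<theta> \<partial>lborel) = complex_of_real (indicator {0<..} (fst \<theta>)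
     * (pi * fst x * snd x / (4 * (fst \<theta> + snd \<theta> + \<epsilon>) ^ 3)
       * exp (- (norm x)\<^sup>2 / (4 * (fst \<theta> + snd \<theta> + \<epsilon>)))))"
proof -
  define a where "a = fst \<theta> + snd \<theta> + \<epsilon>"
  have "(\<lambda>k. kernel_integrand \<epsilon> x k \<theta>) = (\<lambda>k. complex_of_real (indicator {0<..} (fst \<theta>))
      * (complex_of_real (- (fst k * snd k) * exp (- a * (norm k)\<^sup>2)) * cis (inner k x)))"
    by (simp add: fun_eq_iff kernel_integrand_def a_def mult.assoc)
  then have "(\<integral>k. kernel_integrand \<epsilon> x k \<theta> \<partial>lborel) = complex_of_real (indicator {0<..} (fst \<theta>))
      * (\<integral>k. complex_of_real (- (fst k * snd k) * exp (- a * (norm k)\<^sup>2)) * cis (inner k x) \<partial>lborel)"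
    by (simp only: integral_mult_right_zero)
  also have "\<dots> = complex_of_real (indicator {0<..} (fst \<theta>))
      * complex_of_real (pi * fst x * snd x / (4 * a ^ 3) * exp (- (norm x)\<^sup>2 / (4 * a)))"
    by (simp only: integral_gaussian_2d_cis[OF a[folded a_def]])
  finally show ?thesis
    by (simp only: a_def of_real_mult)
qed

context log_subordinator
begin

declare sets_eq_borel [measurable_cong]

sublocale time: pair_sigma_finite lborel \<rho> ..

lemma sigma_finite_time: "sigma_finite_measure (lborel \<Otimes>\<^sub>M \<rho>)"
  by (rule sigma_finite_pair_measure) (auto intro: lborel.sigma_finite_measure_axioms prob_space_imp_sigma_finite prob_space_axioms)

sublocale freq_time: pair_sigma_finite "lborel :: (real \<times> real) measure" "lborel \<Otimes>\<^sub>M \<rho>"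
  by (intro pair_sigma_finite.intro lborel.sigma_finite_measure_axioms sigma_finite_time)

lemma nn_integral_exp_minus:
  assumes c: "c > 0"
  shows "(\<integral>\<^sup>+t. ennreal (exp (- t * c)) \<partial>\<rho>) = ennreal (ln (exp 1 + sqrt c) powr (- \<gamma>))"
proof -
  have "integrable \<rho> (\<lambda>t. exp (- t * c))"
  proof (rule integrable_const_bound[where B = 1])
    show "AE t in \<rho>. norm (exp (- t * c)) \<le> 1"
      using AE_nonneg by eventually_elim (use c in simp)
  qed simp
  then have "(\<integral>\<^sup>+t. ennreal (exp (- t * c)) \<partial>\<rho>) = ennreal (\<integral>t. exp (- t * c) \<partial>\<rho>)"
    by (rule nn_integral_eq_integral) simp
  also have "(\<integral>t. exp (- t * c) \<partial>\<rho>) = ln (exp 1 + sqrt c) powr (- \<gamma>)"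
    using integral_exp_minus_sq[of "sqrt c"] c by simp
  finally show ?thesis .
qed

text \<open>Writing \<open>1 / c = \<integral>\<^sub>0\<^sup>\<infinity> exp (- \<tau> c) d\<tau>\<close> turns the symbol's radial factor into a Laplace transform.\<close>
lemma nn_integral_time_exp_minus:
  assumes c: "c > 0"
  shows "(\<integral>\<^sup>+\<theta>. ennreal (indicator {0<..} (fst \<theta>) * exp (- (fst \<theta> + snd \<theta>) * c)) \<partial>(lborel \<Otimes>\<^sub>M \<rho>))
     = ennreal (ln (exp 1 + sqrt c) powr (- \<gamma>) / c)"
proof -
  have "(\<integral>\<^sup>+\<theta>. ennreal (indicator {0<..} (fst \<theta>) * exp (- (fst \<theta> + snd \<theta>) * c)) \<partial>(lborel \<Otimes>\<^sub>M \<rho>))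
      = (\<integral>\<^sup>+\<tau>. \<integral>\<^sup>+t. ennreal (indicator {0<..} \<tau> * exp (- (\<tau> + t) * c)) \<partial>\<rho> \<partial>lborel)"
    by (subst nn_integral_fst[symmetric]) auto
  also have "\<dots> = (\<integral>\<^sup>+\<tau>. \<integral>\<^sup>+t. ennreal (indicator {0<..} \<tau> * exp (- c * \<tau>)) * ennreal (exp (- t * c)) \<partial>\<rho> \<partial>lborel)"
    by (auto intro!: nn_integral_cong simp: ennreal_mult[symmetric] exp_add[symmetric] algebra_simps)
  also have "\<dots> = (\<integral>\<^sup>+\<tau>. ennreal (indicator {0<..} \<tau> * exp (- c * \<tau>)) * ennreal (ln (exp 1 + sqrt c) powr (- \<gamma>))
      \<partial>lborel)"
    by (intro nn_integral_cong) (subst nn_integral_cmult, simp, simp only: nn_integral_exp_minus[OF c])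
  also have "\<dots> = (\<integral>\<^sup>+\<tau>. ennreal (indicator {0<..} \<tau> * exp (- c * \<tau>)) \<partial>lborel)
      * ennreal (ln (exp 1 + sqrt c) powr (- \<gamma>))"
    by (rule nn_integral_multc) simp
  also have "(\<integral>\<^sup>+\<tau>. ennreal (indicator {0<..} \<tau> * exp (- c * \<tau>)) \<partial>lborel) = ennreal (1 / c)"
    by (rule nn_integral_Ioi_exp[OF c])
  finally show ?thesis
    using c by (simp add: ennreal_mult[symmetric])
qed

lemma integral_time_exp_minus:
  assumes c: "c > 0"
  shows "(\<integral>\<theta>. indicator {0<..} (fst \<theta>) * exp (- (fst \<theta> + snd \<theta>) * c) \<partial>(lborel \<Otimes>\<^sub>M \<rho>))
    = ln (exp 1 + sqrt c) powr (- \<gamma>) / c"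
  using c by (subst integral_eq_nn_integral) (auto simp only: nn_integral_time_exp_minus[OF c], auto)

lemma symb_eq_integral_time:
  "symb \<gamma> k = - (fst k * snd k) *
     (\<integral>\<theta>. indicator {0<..} (fst \<theta>) * exp (- (fst \<theta> + snd \<theta>) * (norm k)\<^sup>2) \<partial>(lborel \<Otimes>\<^sub>M \<rho>))"
proof (cases "k = 0")
  case False
  then show ?thesis
    using integral_time_exp_minus[of "(norm k)\<^sup>2"] by (simp add: symb_def)
qed (simp add: symb_def)

lemma integral_kernel_integrand_time:
  "(\<integral>\<theta>. kernel_integrand \<epsilon> x k \<theta> \<partial>(lborel \<Otimes>\<^sub>M \<rho>))
     = complex_of_real (symb \<gamma> k * exp (- \<epsilon> * (norm k)\<^sup>2)) * cis (inner k x)"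
proof -
  have split: "exp (- (a + \<epsilon>) * c) = exp (- \<epsilon> * c) * exp (- a * c)" for a c :: real
    by (simp add: algebra_simps flip: exp_add)
  have "(\<lambda>\<theta>. kernel_integrand \<epsilon> x k \<theta>) = (\<lambda>\<theta>. (complex_of_real (- (fst k * snd k) * exp (- \<epsilon> * (norm k)\<^sup>2))
      * cis (inner k x)) * complex_of_real (indicator {0<..} (fst \<theta>) * exp (- (fst \<theta> + snd \<theta>) * (norm k)\<^sup>2)))"
    unfolding kernel_integrand_def split[of "fst _ + snd _"] by (simp add: fun_eq_iff mult_ac)
  then have "(\<integral>\<theta>. kernel_integrand \<epsilon> x k \<theta> \<partial>(lborel \<Otimes>\<^sub>M \<rho>))
      = complex_of_real (- (fst k * snd k) * exp (- \<epsilon> * (norm k)\<^sup>2)) * cis (inner k x) * complex_of_real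
          (\<integral>\<theta>. indicator {0<..} (fst \<theta>) * exp (- (fst \<theta> + snd \<theta>) * (norm k)\<^sup>2) \<partial>(lborel \<Otimes>\<^sub>M \<rho>))"
    by (simp only: integral_mult_right_zero integral_complex_of_real)
  then show ?thesis
    by (simp add: symb_eq_integral_time[of k] mult_ac)
qed

lemma nn_integral_norm_kernel_integrand_le:
  "(\<integral>\<^sup>+\<theta>. ennreal (norm (kernel_integrand \<epsilon> x k \<theta>)) \<partial>(lborel \<Otimes>\<^sub>M \<rho>)) \<le> ennreal (exp (- \<epsilon> * (norm k)\<^sup>2))"
proof (cases "k = 0")
  case False
  define c where "c = (norm k)\<^sup>2"
  have c: "c > 0"
    using False by (simp add: c_def)
  have "(\<integral>\<^sup>+\<theta>. ennreal (norm (kernel_integrand \<epsilon> x k \<theta>)) \<partial>(lborel \<Otimes>\<^sub>M \<rho>))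
      = (\<integral>\<^sup>+\<theta>. ennreal (\<bar>fst k * snd k\<bar> * exp (- \<epsilon> * c))
          * ennreal (indicator {0<..} (fst \<theta>) * exp (- (fst \<theta> + snd \<theta>) * c)) \<partial>(lborel \<Otimes>\<^sub>M \<rho>))"
    by (intro nn_integral_cong)
       (simp add: kernel_integrand_def c_def norm_mult abs_mult ennreal_mult[symmetric] algebra_simps
         flip: exp_add)
  also have "\<dots> = ennreal (\<bar>fst k * snd k\<bar> * exp (- \<epsilon> * c)) * ennreal (ln (exp 1 + sqrt c) powr (- \<gamma>) / c)"
    by (subst nn_integral_cmult) (measurable, simp only: nn_integral_time_exp_minus[OF c])
  also have "\<dots> = ennreal (\<bar>fst k * snd k\<bar> * exp (- \<epsilon> * c) * (ln (exp 1 + sqrt c) powr (- \<gamma>) / c))"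
    using c by (simp add: ennreal_mult[symmetric])
  also have "\<dots> \<le> ennreal (exp (- \<epsilon> * (norm k)\<^sup>2))"
  proof (intro ennreal_leI)
    have "\<bar>fst k * snd k\<bar> / c \<le> 1"
      using abs_fst_mult_snd_le_norm_sq[of k] c by (simp add: c_def)
    moreover have "ln (exp 1 + sqrt c) powr (- \<gamma>) \<le> 1"
      using gamma_pos c by (intro ln_exp1_add_powr_le_one) auto
    ultimately have "\<bar>fst k * snd k\<bar> / c * ln (exp 1 + sqrt c) powr (- \<gamma>) \<le> 1"
      using c by (intro mult_le_one) auto
    then have "exp (- \<epsilon> * c) * (\<bar>fst k * snd k\<bar> / c * ln (exp 1 + sqrt c) powr (- \<gamma>)) \<le> exp (- \<epsilon> * c) * 1"
      by (rule mult_left_mono) simp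
    moreover have "\<bar>fst k * snd k\<bar> * exp (- \<epsilon> * c) * (ln (exp 1 + sqrt c) powr (- \<gamma>) / c)
        = exp (- \<epsilon> * c) * (\<bar>fst k * snd k\<bar> / c * ln (exp 1 + sqrt c) powr (- \<gamma>))"
      by simp
    ultimately show "\<bar>fst k * snd k\<bar> * exp (- \<epsilon> * c) * (ln (exp 1 + sqrt c) powr (- \<gamma>) / c) \<le> exp (- \<epsilon> * (norm k)\<^sup>2)"
      unfolding c_def[symmetric] mult_1_right by linarith
  qed
  finally show ?thesis .
qed (simp add: kernel_integrand_def)

lemma borel_measurable_kernel_integrand [measurable]:
  "(\<lambda>(k, \<theta>). kernel_integrand \<epsilon> x k \<theta>) \<in> borel_measurable ((lborel :: (real \<times> real) measure) \<Otimes>\<^sub>M (lborel \<Otimes>\<^sub>M \<rho>))"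
  unfolding kernel_integrand_def by measurable

lemma integrable_kernel_integrand:
  assumes \<epsilon>: "\<epsilon> > 0"
  shows "integrable ((lborel :: (real \<times> real) measure) \<Otimes>\<^sub>M (lborel \<Otimes>\<^sub>M \<rho>)) (\<lambda>(k, \<theta>). kernel_integrand \<epsilon> x k \<theta>)"
proof (rule integrableI_bounded)
  have "(\<integral>\<^sup>+p. ennreal (norm (case p of (k, \<theta>) \<Rightarrow> kernel_integrand \<epsilon> x k \<theta>)) \<partial>(lborel \<Otimes>\<^sub>M (lborel \<Otimes>\<^sub>M \<rho>)))
      = (\<integral>\<^sup>+k. \<integral>\<^sup>+\<theta>. ennreal (norm (kernel_integrand \<epsilon> x k \<theta>)) \<partial>(lborel \<Otimes>\<^sub>M \<rho>) \<partial>lborel)"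
    by (subst sigma_finite_measure.nn_integral_fst[OF sigma_finite_time, symmetric]) auto
  also have "\<dots> \<le> (\<integral>\<^sup>+k. ennreal (exp (- \<epsilon> * (norm (k :: real \<times> real))\<^sup>2)) \<partial>lborel)"
    by (intro nn_integral_mono nn_integral_norm_kernel_integrand_le)
  also have "\<dots> < \<infinity>"
    using integrable_gaussian_2d[OF \<epsilon>] by (simp add: integrable_iff_bounded)
  finally show "(\<integral>\<^sup>+p. ennreal (norm (case p of (k, \<theta>) \<Rightarrow> kernel_integrand \<epsilon> x k \<theta>))
      \<partial>(lborel \<Otimes>\<^sub>M (lborel \<Otimes>\<^sub>M \<rho>))) < \<infinity>" .
qed measurable

definition kernel_profile :: "real \<Rightarrow> real \<Rightarrow> real" where
  "kernel_profile R \<epsilon> = (\<integral>t. indicator {0..} t * regularized_gamma2 (R / (t + \<epsilon>)) \<partial>\<rho>)"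

lemma kernel_profile_integrand_bounds:
  assumes "R > 0" and "\<epsilon> > 0"
  shows "0 \<le> indicator {0..} t * regularized_gamma2 (R / (t + \<epsilon>))"
    and "indicator {0..} t * regularized_gamma2 (R / (t + \<epsilon>)) \<le> 1"
  using assms regularized_gamma2_bounds[of "R / (t + \<epsilon>)"] by (auto split: split_indicator)

lemma integrable_kernel_profile_integrand:
  assumes "R > 0" and "\<epsilon> > 0"
  shows "integrable \<rho> (\<lambda>t. indicator {0..} t * regularized_gamma2 (R / (t + \<epsilon>)))"
proof (rule integrable_const_bound[where B = 1])
  show "AE t in \<rho>. norm (indicator {0..} t * regularized_gamma2 (R / (t + \<epsilon>))) \<le> 1"
    using kernel_profile_integrand_bounds[OF assms] by simp
qed (simp add: regularized_gamma2_def)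

lemma kernel_profile_bounds:
  assumes "R > 0" and "\<epsilon> > 0"
  shows "0 \<le> kernel_profile R \<epsilon>" and "kernel_profile R \<epsilon> \<le> 1"
proof -
  show "0 \<le> kernel_profile R \<epsilon>"
    unfolding kernel_profile_def using kernel_profile_integrand_bounds(1)[OF assms] by simp
  have "kernel_profile R \<epsilon> \<le> (\<integral>t. 1 \<partial>\<rho>)"
    unfolding kernel_profile_def using kernel_profile_integrand_bounds(2)[OF assms]
    by (intro integral_mono integrable_kernel_profile_integrand[OF assms]) auto
  then show "kernel_profile R \<epsilon> \<le> 1"
    by (simp add: prob_space)
qed

lemma kernel_profile_antimono:
  assumes "R > 0" and "0 < a" and "a \<le> b"
  shows "kernel_profile R b \<le> kernel_profile R a"
  unfolding kernel_profile_def
proof (intro integral_mono integrable_kernel_profile_integrand)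
  fix t
  show "indicator {0..} t * regularized_gamma2 (R / (t + b)) \<le> indicator {0..} t * regularized_gamma2 (R / (t + a))"
    using assms by (auto intro!: regularized_gamma2_mono divide_left_mono split: split_indicator)
qed (use assms in auto)

lemma integral_time_cube_inverse_exp:
  assumes R: "R > 0" and \<epsilon>: "\<epsilon> > 0"
  shows "(\<integral>\<theta>. indicator {0<..} (fst \<theta>) * indicator {0..} (snd \<theta>)
      * (1 / (fst \<theta> + snd \<theta> + \<epsilon>) ^ 3 * exp (- R / (fst \<theta> + snd \<theta> + \<epsilon>))) \<partial>(lborel \<Otimes>\<^sub>M \<rho>))
    = kernel_profile R \<epsilon> / R\<^sup>2"
proof -
  define f where "f \<theta> = indicator {0<..} (fst \<theta>) * indicator {0..} (snd \<theta>)
      * (1 / (fst \<theta> + snd \<theta> + \<epsilon>) ^ 3 * exp (- R / (fst \<theta> + snd \<theta> + \<epsilon>)))" for \<theta> :: "real \<times> real"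
  have f_nonneg: "f \<theta> \<ge> 0" for \<theta>
    using \<epsilon> by (auto simp: f_def split: split_indicator)
  have f_meas: "f \<in> borel_measurable (lborel \<Otimes>\<^sub>M \<rho>)"
    unfolding f_def by measurable
  have "(\<integral>\<^sup>+\<theta>. ennreal (f \<theta>) \<partial>(lborel \<Otimes>\<^sub>M \<rho>)) = (\<integral>\<^sup>+t. \<integral>\<^sup>+\<tau>. ennreal (f (\<tau>, t)) \<partial>lborel \<partial>\<rho>)"
    by (subst time.nn_integral_snd[symmetric]) (auto simp: f_def)
  also have "\<dots> = (\<integral>\<^sup>+t. ennreal (indicator {0..} t * regularized_gamma2 (R / (t + \<epsilon>)) / R\<^sup>2) \<partial>\<rho>)"
  proof (intro nn_integral_cong)
    fix t :: real
    show "(\<integral>\<^sup>+\<tau>. ennreal (f (\<tau>, t)) \<partial>lborel) = ennreal (indicator {0..} t * regularized_gamma2 (R / (t + \<epsilon>)) / R\<^sup>2)"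
    proof (cases "t \<ge> 0")
      case True
      then have "f (\<tau>, t) = indicator {0<..} \<tau> * (1 / (\<tau> + (t + \<epsilon>)) ^ 3 * exp (- R / (\<tau> + (t + \<epsilon>))))" for \<tau>
        by (simp add: f_def add.assoc)
      then show ?thesis
        using nn_integral_Ioi_cube_inverse_exp[of "t + \<epsilon>" R] True \<epsilon> R by simp
    qed (simp add: f_def)
  qed
  also have "\<dots> = ennreal (kernel_profile R \<epsilon> / R\<^sup>2)"
    using integrable_kernel_profile_integrand[OF R \<epsilon>] kernel_profile_integrand_bounds[OF R \<epsilon>]
    by (subst nn_integral_eq_integral) (auto simp: kernel_profile_def)
  finally have "(\<integral>\<^sup>+\<theta>. ennreal (f \<theta>) \<partial>(lborel \<Otimes>\<^sub>M \<rho>)) = ennreal (kernel_profile R \<epsilon> / R\<^sup>2)" .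
  then have "(\<integral>\<theta>. f \<theta> \<partial>(lborel \<Otimes>\<^sub>M \<rho>)) = kernel_profile R \<epsilon> / R\<^sup>2"
    using kernel_profile_bounds(1)[OF R \<epsilon>] f_nonneg f_meas
    by (subst integral_eq_nn_integral) auto
  then show ?thesis
    by (simp add: f_def)
qed

lemma AE_integral_kernel_integrand_freq:
  assumes \<epsilon>: "\<epsilon> > 0"
  shows "AE \<theta> in lborel \<Otimes>\<^sub>M \<rho>. (\<integral>k. kernel_integrand \<epsilon> x k \<theta> \<partial>lborel)
    = complex_of_real (pi * fst x * snd x / 4 * (indicator {0<..} (fst \<theta>) * indicator {0..} (snd \<theta>)
        * (1 / (fst \<theta> + snd \<theta> + \<epsilon>) ^ 3 * exp (- ((norm x)\<^sup>2 / 4) / (fst \<theta> + snd \<theta> + \<epsilon>)))))"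
proof -
  have "AE \<theta> in lborel \<Otimes>\<^sub>M \<rho>. 0 \<le> snd \<theta>"
  proof (rule time.AE_pair_measure)
    show "{\<theta> \<in> space (lborel \<Otimes>\<^sub>M \<rho>). 0 \<le> snd \<theta>} \<in> sets (lborel \<Otimes>\<^sub>M \<rho>)"
      by measurable
  qed (auto intro: AE_nonneg)
  then show ?thesis
  proof eventually_elim
    case (elim \<theta>)
    show ?case
    proof (cases "fst \<theta> > 0")
      case True
      then show ?thesis
        using integral_kernel_integrand_freq[of \<theta> \<epsilon> x] elim \<epsilon> by simp
    qed (simp add: kernel_integrand_def)
  qed
qed

lemma kernel_eps_eq_kernel_profile:
  assumes \<epsilon>: "\<epsilon> > 0" and x1: "x1 > 0" and x2: "x2 > 0"
  shows "kernel_eps \<gamma> \<epsilon> (x1, x2)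
    = complex_of_real (x1 * x2 / (pi * (norm (x1, x2)) ^ 4) * kernel_profile ((norm (x1, x2))\<^sup>2 / 4) \<epsilon>)"
proof -
  define x where "x = (x1, x2)"
  define R where "R = (norm x)\<^sup>2 / 4"
  have n: "norm x > 0"
    using x1 by (simp add: x_def zero_prod_def)
  then have R: "R > 0"
    by (simp add: R_def)
  define h where "h \<theta> = indicator {0<..} (fst \<theta>) * indicator {0..} (snd \<theta>)
      * (1 / (fst \<theta> + snd \<theta> + \<epsilon>) ^ 3 * exp (- R / (fst \<theta> + snd \<theta> + \<epsilon>)))" for \<theta> :: "real \<times> real"
  have "kernel_eps \<gamma> \<epsilon> x
      = complex_of_real (1 / (2 * pi)\<^sup>2) * (\<integral>k. (\<integral>\<theta>. kernel_integrand \<epsilon> x k \<theta> \<partial>(lborel \<Otimes>\<^sub>M \<rho>)) \<partial>lborel)"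
    unfolding kernel_eps_def integral_kernel_integrand_time ..
  also have "(\<integral>k. (\<integral>\<theta>. kernel_integrand \<epsilon> x k \<theta> \<partial>(lborel \<Otimes>\<^sub>M \<rho>)) \<partial>lborel)
      = (\<integral>\<theta>. (\<integral>k. kernel_integrand \<epsilon> x k \<theta> \<partial>lborel) \<partial>(lborel \<Otimes>\<^sub>M \<rho>))"
    using freq_time.Fubini_integral[OF integrable_kernel_integrand[OF \<epsilon>]] ..
  also have "\<dots> = (\<integral>\<theta>. complex_of_real (pi * x1 * x2 / 4 * h \<theta>) \<partial>(lborel \<Otimes>\<^sub>M \<rho>))"
    using AE_integral_kernel_integrand_freq[OF \<epsilon>, of x]
    by (intro integral_cong_AE) (auto simp: h_def x_def R_def)
  also have "\<dots> = complex_of_real (pi * x1 * x2 / 4 * (kernel_profile R \<epsilon> / R\<^sup>2))"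
  proof -
    have "(\<integral>\<theta>. h \<theta> \<partial>(lborel \<Otimes>\<^sub>M \<rho>)) = kernel_profile R \<epsilon> / R\<^sup>2"
      unfolding h_def by (rule integral_time_cube_inverse_exp[OF R \<epsilon>])
    then show ?thesis
      by (simp only: integral_complex_of_real integral_mult_right_zero)
  qed
  also have "complex_of_real (1 / (2 * pi)\<^sup>2) * \<dots>
      = complex_of_real (x1 * x2 / (pi * (norm x) ^ 4) * kernel_profile R \<epsilon>)"
    using n by (simp add: R_def field_simps power2_eq_square power4_eq_xxxx flip: of_real_mult)
  finally show ?thesis
    by (simp add: x_def R_def)
qed

lemma tildeK_eq_SUP_kernel_profile:
  assumes x1: "x1 > 0" and x2: "x2 > 0"
  shows "tildeK \<gamma> (x1, x2)
    = x1 * x2 / (pi * (norm (x1, x2)) ^ 4) * (SUP \<epsilon>\<in>{0<..}. kernel_profile ((norm (x1, x2))\<^sup>2 / 4) \<epsilon>)"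
proof -
  define R where "R = (norm (x1, x2))\<^sup>2 / 4"
  define c where "c = x1 * x2 / (pi * (norm (x1, x2)) ^ 4)"
  have R: "R > 0"
    using x1 by (simp add: R_def zero_prod_def)
  have "(kernel_profile R \<longlongrightarrow> (SUP \<epsilon>\<in>{0<..}. kernel_profile R \<epsilon>)) (at_right 0)"
    using kernel_profile_antimono[OF R] kernel_profile_bounds(2)[OF R]
    by (intro antimono_tendsto_at_right_SUP) auto
  then have "((\<lambda>\<epsilon>. complex_of_real (c * kernel_profile R \<epsilon>))
      \<longlongrightarrow> complex_of_real (c * (SUP \<epsilon>\<in>{0<..}. kernel_profile R \<epsilon>))) (at_right 0)"
    by (intro tendsto_of_real tendsto_mult_left)
  moreover have "\<forall>\<^sub>F \<epsilon> in at_right 0. complex_of_real (c * kernel_profile R \<epsilon>) = kernel_eps \<gamma> \<epsilon> (x1, x2)"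
    using eventually_at_right_less[of 0]
    by eventually_elim (simp add: kernel_eps_eq_kernel_profile[OF _ x1 x2] c_def R_def)
  ultimately have "((\<lambda>\<epsilon>. kernel_eps \<gamma> \<epsilon> (x1, x2)) \<longlongrightarrow> complex_of_real (c * (SUP \<epsilon>\<in>{0<..}. kernel_profile R \<epsilon>)))
      (at_right 0)"
    by (rule Lim_transform_eventually)
  then show ?thesis
    unfolding tildeK_def by (simp add: tendsto_Lim c_def R_def)
qed

text \<open>At \<open>\<epsilon> = R\<close> the argument \<open>w = R / (t + R)\<close> has \<open>exp (- 1 / w) = exp (- 1) exp (- t / R)\<close>,
  a Laplace transform of \<open>\<rho>\<close> at \<open>r = 1 / sqrt R\<close>.\<close>
lemma kernel_profile_lower_bound:
  assumes R: "R > 0"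
  shows "exp (- 1) / 12 * ln (exp 1 + 1 / sqrt R) powr (- \<gamma>) \<le> kernel_profile R R"
proof -
  have r: "1 / sqrt R > 0"
    using R by simp
  have "exp (- 1) / 12 * ln (exp 1 + 1 / sqrt R) powr (- \<gamma>) = (\<integral>t. exp (- 1) / 12 * exp (- t * (1 / sqrt R)\<^sup>2) \<partial>\<rho>)"
    by (simp only: integral_mult_right_zero integral_exp_minus_sq[OF r])
  also have "\<dots> \<le> kernel_profile R R"
    unfolding kernel_profile_def
  proof (rule integral_mono_AE)
    have "norm (exp (- 1) / 12 * exp (- t * (1 / sqrt R)\<^sup>2)) \<le> 1" if "t \<ge> 0" for t
    proof -
      have "exp (- 1) \<le> (1::real)"
        by simp
      then have "exp (- 1) / 12 \<le> (1::real)"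
        by linarith
      then have "exp (- 1) / 12 * exp (- t * (1 / sqrt R)\<^sup>2) \<le> 1 * 1"
        using that by (intro mult_mono) auto
      then show ?thesis
        by simp
    qed
    then show "integrable \<rho> (\<lambda>t. exp (- 1) / 12 * exp (- t * (1 / sqrt R)\<^sup>2))"
      using AE_nonneg by (intro integrable_const_bound[where B = 1]) (auto elim!: eventually_mono)
    show "integrable \<rho> (\<lambda>t. indicator {0..} t * regularized_gamma2 (R / (t + R)))"
      by (rule integrable_kernel_profile_integrand[OF R R])
    show "AE t in \<rho>. exp (- 1) / 12 * exp (- t * (1 / sqrt R)\<^sup>2) \<le> indicator {0..} t * regularized_gamma2 (R / (t + R))"
      using AE_nonneg
    proof eventually_elim
      case (elim t)
      have "exp (- 1 / (R / (t + R))) = exp (- 1) * exp (- t * (1 / sqrt R)\<^sup>2)"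
        using R elim by (simp add: power_divide field_simps flip: exp_add)
      then show ?case
        using exp_minus_inverse_le_regularized_gamma2[of "R / (t + R)"] R elim by simp
    qed
  qed
  finally show ?thesis .
qed

lemma tildeK_lower_bound:
  assumes x1: "x1 > 0" and x2: "x2 > 0"
  shows "x1 * x2 / (pi * (norm (x1, x2)) ^ 4) * (exp (- 1) / 12 * 2 powr (- \<gamma>)
      * ln (exp 1 + 1 / norm (x1, x2)) powr (- \<gamma>)) \<le> tildeK \<gamma> (x1, x2)"
proof -
  define n where "n = norm (x1, x2)"
  define R where "R = n\<^sup>2 / 4"
  have n: "n > 0"
    using x1 by (simp add: n_def zero_prod_def)
  then have R: "R > 0" and sqrt_R: "1 / sqrt R = 2 * (1 / n)"
    by (simp_all add: R_def real_sqrt_divide)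
  have "exp (- 1) / 12 * 2 powr (- \<gamma>) * ln (exp 1 + 1 / n) powr (- \<gamma>)
      \<le> exp (- 1) / 12 * ln (exp 1 + 1 / sqrt R) powr (- \<gamma>)"
    unfolding sqrt_R using ln_exp1_add_double_powr_ge[of "1 / n" \<gamma>] n gamma_pos by simp
  also have "\<dots> \<le> kernel_profile R R"
    by (rule kernel_profile_lower_bound[OF R])
  also have "\<dots> \<le> (SUP \<epsilon>\<in>{0<..}. kernel_profile R \<epsilon>)"
    using R kernel_profile_bounds(2)[OF R] by (intro cSUP_upper bdd_aboveI2) auto
  finally show ?thesis
    using x1 x2 n unfolding tildeK_eq_SUP_kernel_profile[OF x1 x2] n_def[symmetric] R_def[symmetric]
    by (intro mult_left_mono) auto
qed

end

theorem lemma3p3: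
  fixes \<gamma> :: real
  assumes "\<gamma> > 0"
  shows "\<exists>C > 0. \<forall>x1 x2 :: real. x1 > 0 \<longrightarrow> x2 > 0 \<longrightarrow>
           tildeK \<gamma> (x1, x2) \<ge>
             C * x1 * x2 / (norm (x1, x2))^4 * (ln (exp 1 + 1 / norm (x1, x2))) powr (- \<gamma>)
               * exp (- (norm (x1, x2))\<^sup>2)"
proof -
  interpret log_subordinator "log_subordinator_measure \<gamma>" \<gamma>
    using log_subordinator_log_subordinator_measure[OF assms] .
  define C where "C = exp (- 1) / 12 * 2 powr (- \<gamma>) / pi"
  have "C * x1 * x2 / (norm (x1, x2))^4 * (ln (exp 1 + 1 / norm (x1, x2))) powr (- \<gamma>) * exp (- (norm (x1, x2))\<^sup>2)
      \<le> tildeK \<gamma> (x1, x2)" if x1: "x1 > 0" and x2: "x2 > 0" for x1 x2 :: real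
  proof -
    have "C * x1 * x2 / (norm (x1, x2))^4 * (ln (exp 1 + 1 / norm (x1, x2))) powr (- \<gamma>) * exp (- (norm (x1, x2))\<^sup>2)
        \<le> C * x1 * x2 / (norm (x1, x2))^4 * (ln (exp 1 + 1 / norm (x1, x2))) powr (- \<gamma>)"
      using x1 x2 by (intro mult_left_le) (auto simp: C_def)
    also have "\<dots> \<le> tildeK \<gamma> (x1, x2)"
      using tildeK_lower_bound[OF x1 x2] by (simp add: C_def field_simps)
    finally show ?thesis .
  qed
  moreover have "C > 0"
    by (simp add: C_def)
  ultimately show ?thesis
    by auto
qed

end
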